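(* Let $\tau>1$, let $\kappa\ge3$ be an integer and let $x^\dagger\in\mathcal X$ satisfy $\bar k^\delta_{\mathrm{pr}}(x^\dagger)\ge\kappa$. Then on the event $\Omega_\kappa$ one has $k^\delta_{\mathrm{pr}}(x^\dagger)-1\ge\kappa/3$.
   Context: Setting: $K:\mathcal X\to\mathcal Y$ compact injective with dense range between infinite-dimensional real separable Hilbert spaces, singular system $(\sigma_j,v_j,u_j)$ ($(v_j),(u_j)$ orthonormal bases, $\sigma_1\ge\sigma_2\ge\dots>0$, $Kv_j=\sigma_ju_j$, $K^*u_j=\sigma_jv_j$); $y^\dagger=Kx^\dagger$, $\delta>0$, data $(y^\delta,u_j):=(y^\dagger,u_j)+\delta(Z,u_j)$ with real random variables $(Z,u_j)$. With $\min\emptyset=\infty$: $k^\delta_{\mathrm{pr}}(x^\dagger):=\min\{k\in\mathbb N_0:\sum_{j=1}^k(y^\delta-y^\dagger,u_j)^2\ge\sum_{j=k+1}^\infty(y^\dagger,u_j)^2\}$, $\bar k^\delta_{\mathrm{pr}}(x^\dagger):=\min\{k\in\mathbb N_0:\delta^2k\ge\sum_{j=k+1}^\infty(y^\dagger,u_j)^2\}$. With $\varepsilon_\tau:=\min\big(\frac{(\tau+1)^2}{4}-1,\frac13\big)$, define the event $$\Omega_\kappa:=\Big\{\Big|\sum_{j=1}^m(y^\delta-y^\dagger,u_j)^2-m\delta^2\Big|\le\varepsilon_\tau m\delta^2\ \text{for all integers } m\ge\kappa/3\Big\}.$$ *)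

theory Defs
  imports "HOL-Analysis.Analysis" "HOL-Library.Extended_Nat"
begin

definition compact_operator :: "('a::real_normed_vector \<Rightarrow> 'b::real_normed_vector) \<Rightarrow> bool" where
  "compact_operator K \<longleftrightarrow> bounded_linear K \<and> compact (closure (K ` cball 0 1))"

definition orthonormal_basis1 :: "(nat \<Rightarrow> 'a::{real_inner,complete_space}) \<Rightarrow> bool" where
  "orthonormal_basis1 u \<longleftrightarrow>
     (\<forall>i\<ge>1. \<forall>j\<ge>1. inner (u i) (u j) = (if i = j then 1 else 0)) \<and>
     closure (span (u ` {1..})) = UNIV"

definition singular_system ::
  "('x::{real_inner,complete_space} \<Rightarrow> 'y::{real_inner,complete_space}) \<Rightarrow> ('y \<Rightarrow> 'x)
   \<Rightarrow> (nat \<Rightarrow> real) \<Rightarrow> (nat \<Rightarrow> 'x) \<Rightarrow> (nat \<Rightarrow> 'y) \<Rightarrow> bool" where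
  "singular_system K Kstar \<sigma> v u \<longleftrightarrow>
     (\<forall>x y. inner (K x) y = inner x (Kstar y)) \<and>
     orthonormal_basis1 v \<and> orthonormal_basis1 u \<and>
     (\<forall>j\<ge>1. \<sigma> j > 0 \<and> \<sigma> (Suc j) \<le> \<sigma> j) \<and>
     (\<forall>j\<ge>1. K (v j) = \<sigma> j *\<^sub>R u j \<and> Kstar (u j) = \<sigma> j *\<^sub>R v j)"

text \<open>Tail sum  \<Sum>_{j=k+1}^\<infinity> c_j^2  of coefficients c_j = (y\<dagger>,u_j).\<close>
definition tail_sq :: "(nat \<Rightarrow> real) \<Rightarrow> nat \<Rightarrow> real" where
  "tail_sq c k = (\<Sum>i. (c (i + k + 1))\<^sup>2)"

definition min_enat :: "nat set \<Rightarrow> enat" where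
  "min_enat S = (if S = {} then \<infinity> else enat (LEAST k. k \<in> S))"

text \<open>k_pr: e_j = (y^\<delta> - y\<dagger>, u_j), c_j = (y\<dagger>, u_j).\<close>
definition k_pr :: "(nat \<Rightarrow> real) \<Rightarrow> (nat \<Rightarrow> real) \<Rightarrow> enat" where
  "k_pr e c = min_enat {k. (\<Sum>j=1..k. (e j)\<^sup>2) \<ge> tail_sq c k}"

definition k_pr_bar :: "real \<Rightarrow> (nat \<Rightarrow> real) \<Rightarrow> enat" where
  "k_pr_bar \<delta> c = min_enat {k. \<delta>\<^sup>2 * real k \<ge> tail_sq c k}"

definition eps_tau :: "real \<Rightarrow> real" where
  "eps_tau \<tau> = min ((\<tau> + 1)\<^sup>2 / 4 - 1) (1/3)"

text \<open>The event Omega_kappa, evaluated at a realisation with noise coefficients e.\<close>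
definition Omega_event :: "real \<Rightarrow> real \<Rightarrow> nat \<Rightarrow> (nat \<Rightarrow> real) \<Rightarrow> bool" where
  "Omega_event \<tau> \<delta> \<kappa> e \<longleftrightarrow>
     (\<forall>m::nat. real m \<ge> real \<kappa> / 3 \<longrightarrow>
        \<bar>(\<Sum>j=1..m. (e j)\<^sup>2) - real m * \<delta>\<^sup>2\<bar> \<le> eps_tau \<tau> * real m * \<delta>\<^sup>2)"

end

theory Submission
  imports Defs
begin

text \<open>
  If the stopping index k were at most m = ceil(\<kappa>/3), the noise energy up to k would be at
  most the one up to m, which on the event Omega_event is at most (4/3) m \<delta>^2 \<le> (\<kappa> - 1) \<delta>^2.
  But the discrepancy index being at least \<kappa> says that the tail of y\<dagger> beyond \<kappa> - 1 exceeds
  (\<kappa> - 1) \<delta>^2, and tails only grow as the index decreases, so the stopping criterion cannot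
  already hold at k.
\<close>

lemma suminf_shift_le:
  fixes f :: "nat \<Rightarrow> real"
  assumes "\<And>i. f i \<ge> 0"
  shows "(\<Sum>i. f (i + d)) \<le> (\<Sum>i. f i)"
proof (cases "summable f")
  case True
  then have "(\<Sum>i. f i) = (\<Sum>i. f (i + d)) + (\<Sum>i<d. f i)"
    by (rule suminf_split_initial_segment)
  moreover have "(\<Sum>i<d. f i) \<ge> 0"
    using assms by (simp add: sum_nonneg)
  ultimately show ?thesis by linarith
next
  case False
  \<comment> \<open>neither series converges, so both sums are the same junk value\<close>
  moreover have "\<not> summable (\<lambda>i. f (i + d))"
    using False by simp
  ultimately have "\<forall>s. \<not> f sums s" "\<forall>s. \<not> (\<lambda>i. f (i + d)) sums s"
    unfolding summable_def by blast+
  then show ?thesis by (simp add: suminf_def)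
qed

lemma tail_sq_antimono:
  assumes "k \<le> n"
  shows "tail_sq c n \<le> tail_sq c k"
proof -
  have "tail_sq c n = (\<Sum>i. (c (i + (n - k) + k + 1))\<^sup>2)"
    using assms by (simp add: tail_sq_def)
  also have "\<dots> \<le> tail_sq c k"
    unfolding tail_sq_def by (rule suminf_shift_le[of "\<lambda>i. (c (i + k + 1))\<^sup>2"]) simp
  finally show ?thesis .
qed

lemma min_enat_le: "m \<in> S \<Longrightarrow> min_enat S \<le> enat m"
  by (auto simp: min_enat_def intro: Least_le)

lemma min_enat_eq_enatD:
  assumes "min_enat S = enat k"
  shows "k \<in> S"
proof -
  have "S \<noteq> {}" and "k = (LEAST k. k \<in> S)"
    using assms by (auto simp: min_enat_def split: if_splits)
  then show ?thesis by (auto intro: LeastI)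
qed

lemma tail_sq_gt_below_k_pr_bar:
  assumes "enat \<kappa> \<le> k_pr_bar \<delta> c" and "n < \<kappa>"
  shows "\<delta>\<^sup>2 * real n < tail_sq c n"
proof (rule ccontr)
  assume "\<not> ?thesis"
  then have "k_pr_bar \<delta> c \<le> enat n"
    unfolding k_pr_bar_def by (intro min_enat_le) simp
  from order_trans[OF assms(1) this] assms(2) show False by simp
qed

lemma Omega_event_partial_sum_le:
  assumes "Omega_event \<tau> \<delta> \<kappa> e" and "real \<kappa> / 3 \<le> real m"
  shows "(\<Sum>j=1..m. (e j)\<^sup>2) \<le> 4 / 3 * real m * \<delta>\<^sup>2"
proof -
  have "\<bar>(\<Sum>j=1..m. (e j)\<^sup>2) - real m * \<delta>\<^sup>2\<bar> \<le> eps_tau \<tau> * (real m * \<delta>\<^sup>2)"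
    using assms unfolding Omega_event_def by (simp add: mult.assoc)
  also have "\<dots> \<le> 1 / 3 * (real m * \<delta>\<^sup>2)"
    using min.cobounded2 unfolding eps_tau_def by (rule mult_right_mono) simp
  finally have "(\<Sum>j=1..m. (e j)\<^sup>2) - real m * \<delta>\<^sup>2 \<le> 1 / 3 * (real m * \<delta>\<^sup>2)"
    by (rule abs_le_D1)
  then show ?thesis by linarith
qed

lemma k_pr_lower_bound:
  assumes Omega: "Omega_event \<tau> \<delta> \<kappa> e" and bar: "enat \<kappa> \<le> k_pr_bar \<delta> c"
    and "\<kappa> \<ge> 3" and "k_pr e c = enat k"
  shows "real \<kappa> / 3 \<le> real k - 1"
proof (rule ccontr)
  define m where "m = (\<kappa> + 2) div 3"
  have stop: "tail_sq c k \<le> (\<Sum>j=1..k. (e j)\<^sup>2)"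
    using min_enat_eq_enatD[OF \<open>k_pr e c = enat k\<close>[unfolded k_pr_def]] by simp
  assume "\<not> ?thesis"
  then have "3 * k < \<kappa> + 3" by linarith
  then have "k \<le> m" "m < \<kappa>" "\<kappa> \<le> 3 * m" "4 * m \<le> 3 * (\<kappa> - 1)"
    using \<open>\<kappa> \<ge> 3\<close> by (auto simp: m_def)
  then have "real \<kappa> \<le> real (3 * m)" "real (4 * m) \<le> real (3 * (\<kappa> - 1))"
    by (simp_all only: of_nat_le_iff)
  then have "real \<kappa> / 3 \<le> real m" "4 / 3 * real m \<le> real (\<kappa> - 1)"
    by simp_all
  have "(\<Sum>j=1..k. (e j)\<^sup>2) \<le> (\<Sum>j=1..m. (e j)\<^sup>2)"
    using \<open>k \<le> m\<close> by (intro sum_mono2) auto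
  also have "\<dots> \<le> 4 / 3 * real m * \<delta>\<^sup>2"
    using Omega_event_partial_sum_le[OF Omega \<open>real \<kappa> / 3 \<le> real m\<close>] .
  also have "\<dots> \<le> \<delta>\<^sup>2 * real (\<kappa> - 1)"
    using mult_right_mono[OF \<open>4 / 3 * real m \<le> real (\<kappa> - 1)\<close>, of "\<delta>\<^sup>2"]
    by (simp add: mult.commute)
  also have "\<dots> < tail_sq c (\<kappa> - 1)"
    using tail_sq_gt_below_k_pr_bar[OF bar, of "\<kappa> - 1"] \<open>\<kappa> \<ge> 3\<close> by simp
  also have "\<dots> \<le> tail_sq c k"
    using tail_sq_antimono \<open>k \<le> m\<close> \<open>m < \<kappa>\<close> by simp
  finally show False using stop by simp
qed

theorem mainTheorem10:
  fixes K :: "'x::{real_inner,complete_space} \<Rightarrow> 'y::{real_inner,complete_space}"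
    and Kstar :: "'y \<Rightarrow> 'x"
    and \<sigma> :: "nat \<Rightarrow> real" and v :: "nat \<Rightarrow> 'x" and u :: "nat \<Rightarrow> 'y"
    and xdag :: 'x and \<delta> \<tau> :: real and \<kappa> :: nat
    and z :: "nat \<Rightarrow> real"   \<comment> \<open>a realisation of the noise coefficients (Z,u_j)\<close>
    and yd :: "nat \<Rightarrow> real"  \<comment> \<open>data coefficients (y^\<delta>,u_j)\<close>
  assumes "compact_operator K" and "inj K" and "closure (range K) = UNIV"
    and "singular_system K Kstar \<sigma> v u"
    and "\<delta> > 0"
    and "\<And>j. yd j = inner (K xdag) (u j) + \<delta> * z j"
    and "\<tau> > 1" and "\<kappa> \<ge> 3"
    and "k_pr_bar \<delta> (\<lambda>j. inner (K xdag) (u j)) \<ge> enat \<kappa>"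
    and "Omega_event \<tau> \<delta> \<kappa> (\<lambda>j. yd j - inner (K xdag) (u j))"
  shows "k_pr (\<lambda>j. yd j - inner (K xdag) (u j)) (\<lambda>j. inner (K xdag) (u j)) = \<infinity> \<or>
         (\<exists>k. k_pr (\<lambda>j. yd j - inner (K xdag) (u j)) (\<lambda>j. inner (K xdag) (u j)) = enat k
              \<and> real k - 1 \<ge> real \<kappa> / 3)"
proof (cases "k_pr (\<lambda>j. yd j - inner (K xdag) (u j)) (\<lambda>j. inner (K xdag) (u j))")
  case (enat k)
  \<comment> \<open>only the coefficient sequences matter\<close>
  with assms(8-10) k_pr_lower_bound show ?thesis by blast
qed simp

end
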